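(* Let $K$ be a number field with $\sqrt{2}\in K$. Then there are infinitely many points $(x,y)\in K^2$ such that each of the squared distances $x^2+y^2$, $x^2+(1-y)^2$, $(1-x)^2+y^2$, $(1-x)^2+(1-y)^2$ to the vertices $(0,0),(0,1),(1,0),(1,1)$ of the unit square is the square of an element of $K$.
   Context: A distance is called $K$-rational if it lies in $K$. For a point with coordinates in $K$, the distance to a vertex of the unit square is $K$-rational exactly when the corresponding squared distance is the square of an element of $K$. *)

theory Defs
  imports Complex_Main
begin

definition complex_subfield :: "complex set \<Rightarrow> bool" where
  "complex_subfield K \<longleftrightarrow> 0 \<in> K \<and> 1 \<in> K \<and>
     (\<forall>a\<in>K. \<forall>b\<in>K. a + b \<in> K \<and> a - b \<in> K \<and> a * b \<in> K) \<and>
     (\<forall>a\<in>K. a \<noteq> 0 \<longrightarrow> inverse a \<in> K)"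

text \<open>A number field, realised (via an embedding) as a subfield of the complex numbers
  of finite dimension over the rationals: it is contained in the rational span of a finite set.\<close>
definition number_field :: "complex set \<Rightarrow> bool" where
  "number_field K \<longleftrightarrow> complex_subfield K \<and>
     (\<exists>B. finite B \<and> K \<subseteq> {\<Sum>b\<in>B. of_rat (c b) * b | c. True})"

end

theory Submission
  imports Defs
begin

text \<open>On the diagonal \<open>y = x\<close> the distances to \<open>(0,0)\<close> and \<open>(1,1)\<close> are \<open>\<surd>2 x\<close> and
  \<open>\<surd>2 (1 - x)\<close>, and both distances to \<open>(0,1)\<close> and \<open>(1,0)\<close> equal \<open>\<surd>(x\<^sup>2 + (1 - x)\<^sup>2)\<close>.
  So it suffices to find infinitely many rationals \<open>x\<close> with \<open>x\<^sup>2 + (1 - x)\<^sup>2\<close> a square: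
  the Pythagorean triple \<open>(t\<^sup>2 - 1, 2t, t\<^sup>2 + 1)\<close> scaled by \<open>t\<^sup>2 + 2t - 1\<close>, the sum of its legs,
  provides them for \<open>t = 0, 1, 2, \<dots>\<close>.\<close>

definition unit_square_rational_points :: "complex set \<Rightarrow> (complex \<times> complex) set" where
  "unit_square_rational_points K = {(x, y). x \<in> K \<and> y \<in> K \<and>
     (\<exists>d\<in>K. x ^ 2 + y ^ 2 = d ^ 2) \<and>
     (\<exists>d\<in>K. x ^ 2 + (1 - y) ^ 2 = d ^ 2) \<and>
     (\<exists>d\<in>K. (1 - x) ^ 2 + y ^ 2 = d ^ 2) \<and>
     (\<exists>d\<in>K. (1 - x) ^ 2 + (1 - y) ^ 2 = d ^ 2)}"

lemma complex_subfield_of_nat: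
  assumes "complex_subfield K"
  shows "of_nat n \<in> K"
  using assms by (induction n) (auto simp: complex_subfield_def)

lemma complex_subfield_divide:
  assumes "complex_subfield K" "a \<in> K" "b \<in> K"
  shows "a / b \<in> K"
  using assms by (cases "b = 0") (auto simp: complex_subfield_def divide_inverse)

definition diagonal_param :: "'a::field \<Rightarrow> 'a" where
  "diagonal_param t = (t ^ 2 - 1) / (t ^ 2 + 2 * t - 1)"

lemma diagonal_param_pythagorean:
  fixes t :: "'a::field"
  assumes "t ^ 2 + 2 * t - 1 \<noteq> 0"
  shows "diagonal_param t ^ 2 + (1 - diagonal_param t) ^ 2 = ((t ^ 2 + 1) / (t ^ 2 + 2 * t - 1)) ^ 2"
proof -
  let ?D = "t ^ 2 + 2 * t - 1"
  have "1 - diagonal_param t = ?D / ?D - (t ^ 2 - 1) / ?D"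
    by (simp only: diagonal_param_def divide_self[OF assms])
  also have "\<dots> = (?D - (t ^ 2 - 1)) / ?D"
    by (rule diff_divide_distrib[symmetric])
  also have "?D - (t ^ 2 - 1) = 2 * t"
    by simp
  finally have "diagonal_param t ^ 2 + (1 - diagonal_param t) ^ 2
      = ((t ^ 2 - 1) ^ 2 + (2 * t) ^ 2) / ?D ^ 2"
    by (simp add: diagonal_param_def power_divide add_divide_distrib)
  also have "(t ^ 2 - 1) ^ 2 + (2 * t) ^ 2 = (t ^ 2 + 1) ^ 2"
    by (simp add: algebra_simps power2_eq_square)
  finally show ?thesis by (simp add: power_divide)
qed

lemma of_nat_diagonal_denom_nonzero:
  "(of_nat m :: 'a::field_char_0) ^ 2 + 2 * of_nat m - 1 \<noteq> 0"
proof -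
  have "int m ^ 2 + 2 * int m - 1 \<noteq> 0"
  proof (cases m)
    case (Suc k)
    then have "int m ^ 2 + 2 * int m \<ge> 2" by (simp add: power2_eq_square)
    then show ?thesis by simp
  qed simp
  then have "(of_int (int m ^ 2 + 2 * int m - 1) :: 'a) \<noteq> 0"
    unfolding of_int_eq_0_iff .
  then show ?thesis by simp
qed

lemma inj_diagonal_param_of_nat: "inj (\<lambda>m. diagonal_param (of_nat m :: 'a::field_char_0))"
proof (rule injI)
  fix m n :: nat
  assume "diagonal_param (of_nat m :: 'a) = diagonal_param (of_nat n)"
  then have "(of_nat m ^ 2 - 1) * (of_nat n ^ 2 + 2 * of_nat n - 1)
      = (of_nat n ^ 2 - 1) * ((of_nat m :: 'a) ^ 2 + 2 * of_nat m - 1)"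
    unfolding diagonal_param_def
    using frac_eq_eq[OF of_nat_diagonal_denom_nonzero[of m, where 'a='a]
        of_nat_diagonal_denom_nonzero[of n, where 'a='a]]
    by blast
  then have "2 * (of_nat m - of_nat n) * (of_nat m * of_nat n + (1 :: 'a)) = 0"
    by (simp add: algebra_simps power2_eq_square)
  moreover have "of_nat m * of_nat n + (1 :: 'a) \<noteq> 0"
    using of_nat_neq_0[of "m * n", where 'a='a] by (simp add: add.commute)
  ultimately show "m = n" by simp
qed

lemma diagonal_point_in_unit_square_rational_points:
  assumes "complex_subfield K" "s \<in> K" "s ^ 2 = 2"
    and "x \<in> K" "d \<in> K" "x ^ 2 + (1 - x) ^ 2 = d ^ 2"
  shows "(x, x) \<in> unit_square_rational_points K"
proof -
  have K: "s * x \<in> K" "s * (1 - x) \<in> K"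
    using assms by (auto simp: complex_subfield_def)
  have "x ^ 2 + x ^ 2 = (s * x) ^ 2" "(1 - x) ^ 2 + (1 - x) ^ 2 = (s * (1 - x)) ^ 2"
    using assms(3) by (simp_all add: power_mult_distrib)
  moreover have "(1 - x) ^ 2 + x ^ 2 = d ^ 2"
    using assms(6) by (simp add: add.commute)
  ultimately show ?thesis
    using assms K unfolding unit_square_rational_points_def by blast
qed

theorem theorem2p2:
  fixes K :: "complex set"
  assumes "number_field K"
    and "\<exists>s\<in>K. s ^ 2 = 2"
  shows "infinite {(x, y). x \<in> K \<and> y \<in> K \<and>
            (\<exists>d\<in>K. x ^ 2 + y ^ 2 = d ^ 2) \<and>
            (\<exists>d\<in>K. x ^ 2 + (1 - y) ^ 2 = d ^ 2) \<and>
            (\<exists>d\<in>K. (1 - x) ^ 2 + y ^ 2 = d ^ 2) \<and>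
            (\<exists>d\<in>K. (1 - x) ^ 2 + (1 - y) ^ 2 = d ^ 2)}"
proof -
  have K: "complex_subfield K" using assms(1) by (simp add: number_field_def)
  obtain s where s: "s \<in> K" "s ^ 2 = 2" using assms(2) by blast
  let ?x = "\<lambda>m. diagonal_param (of_nat m :: complex)"
  have "(?x m, ?x m) \<in> unit_square_rational_points K" for m
  proof (rule diagonal_point_in_unit_square_rational_points[OF K s])
    let ?t = "of_nat m :: complex"
    have closed: "?t ^ 2 - 1 \<in> K" "?t ^ 2 + 1 \<in> K" "?t ^ 2 + 2 * ?t - 1 \<in> K"
      using K complex_subfield_of_nat[OF K, of "m ^ 2"] complex_subfield_of_nat[OF K, of "2 * m"]
      by (auto simp: complex_subfield_def)
    show "?x m \<in> K" "(?t ^ 2 + 1) / (?t ^ 2 + 2 * ?t - 1) \<in> K"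
      using closed by (auto simp: diagonal_param_def intro: complex_subfield_divide[OF K])
    show "?x m ^ 2 + (1 - ?x m) ^ 2 = ((?t ^ 2 + 1) / (?t ^ 2 + 2 * ?t - 1)) ^ 2"
      by (rule diagonal_param_pythagorean[OF of_nat_diagonal_denom_nonzero])
  qed
  then have "range (\<lambda>m. (?x m, ?x m)) \<subseteq> unit_square_rational_points K"
    by blast
  moreover have "inj (\<lambda>m. (?x m, ?x m))"
    using inj_diagonal_param_of_nat[where 'a=complex] by (simp add: inj_on_def)
  ultimately have "infinite (unit_square_rational_points K)"
    using finite_imageD finite_subset infinite_UNIV_nat by blast
  then show ?thesis by (simp add: unit_square_rational_points_def)
qed

end
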